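(* Let $p$ be a prime and let $\mathbb{C}_p$ be the field of complex $p$-adic numbers with $p$-adic norm $|\cdot|_p$. Let $a,b,c\in\mathbb{C}_p$ with $b\neq 0$ and $c\neq ab$, and let $f(x)=\frac{x+a}{bx+c}$ for $x\in\mathbb{C}_p$, $x\neq \hat x:=-c/b$. Fix a square root $\sqrt{(c-1)^2+4ab}\in\mathbb{C}_p$ and let $$x_1=\frac{1-c+\sqrt{(c-1)^2+4ab}}{2b},\qquad x_2=\frac{1-c-\sqrt{(c-1)^2+4ab}}{2b}$$ be the fixed points of $f$. Assume $$|f'(x_i)|_p=\left|\frac{c-ab}{(bx_i+c)^2}\right|_p=1\quad (i=1,2)$$ and $$\left|\frac{b}{\sqrt{c-ab}}\right|_p<1 .$$ Put $\varepsilon_c=\left|\frac{\sqrt{c-ab}}{b}\right|_p-1$. Then for $i=1,2$ the maximum Siegel disk of $f$ centered at $x_i$ is $$SI(x_i)=V_{1+\varepsilon_c}(x_i).$$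
   Context: For $x_0\in\mathbb{C}_p$ and $r>0$: $U_r(x_0)=\{x\in\mathbb{C}_p:|x-x_0|_p\le r\}$, $V_r(x_0)=\{x\in\mathbb{C}_p:|x-x_0|_p<r\}$, $S_r(x_0)=\{x\in\mathbb{C}_p:|x-x_0|_p=r\}$. The value $|\sqrt{c-ab}|_p=|c-ab|_p^{1/2}$ does not depend on the choice of square root. For a fixed point $x_0$ of $f$, a ball $V_r(x_0)$ (contained in the domain of $f$) is called a Siegel disk if every sphere $S_\rho(x_0)$ with $\rho<r$ is invariant, i.e. for every $x\in S_\rho(x_0)$ all iterates $f^n(x)$, $n=1,2,\dots$, are defined and lie in $S_\rho(x_0)$. The maximum Siegel disk $SI(x_0)$ is the union of all Siegel disks centered at $x_0$. *)

theory Defs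
  imports "HOL-Computational_Algebra.Polynomial" "HOL-Computational_Algebra.Primes"
begin

text \<open>C_p is not available in Isabelle/HOL. We model it abstractly as a field 'a carrying
  a non-archimedean absolute value N (the p-adic norm), complete, algebraically closed,
  with N p = 1/p.\<close>

definition nonarch_abs :: "('a::field \<Rightarrow> real) \<Rightarrow> bool" where
  "nonarch_abs N \<longleftrightarrow> (\<forall>x. 0 \<le> N x) \<and> (\<forall>x. N x = 0 \<longleftrightarrow> x = 0)
     \<and> (\<forall>x y. N (x * y) = N x * N y) \<and> (\<forall>x y. N (x + y) \<le> max (N x) (N y))"

definition complete_wrt :: "('a::field \<Rightarrow> real) \<Rightarrow> bool" where
  "complete_wrt N \<longleftrightarrow> (\<forall>X::nat \<Rightarrow> 'a.
     (\<forall>e>0. \<exists>M. \<forall>m\<ge>M. \<forall>n\<ge>M. N (X m - X n) < e) \<longrightarrow>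
     (\<exists>L. \<forall>e>0. \<exists>M. \<forall>n\<ge>M. N (X n - L) < e))"

definition alg_closed_field :: "'a::field itself \<Rightarrow> bool" where
  "alg_closed_field _ \<longleftrightarrow> (\<forall>q::'a poly. 0 < degree q \<longrightarrow> (\<exists>x. poly q x = 0))"

definition Cp_model :: "nat \<Rightarrow> ('a::field \<Rightarrow> real) \<Rightarrow> bool" where
  "Cp_model p N \<longleftrightarrow> prime p \<and> nonarch_abs N \<and> complete_wrt N
     \<and> alg_closed_field TYPE('a) \<and> N (of_nat p) = 1 / real p"

definition ballV :: "('a::field \<Rightarrow> real) \<Rightarrow> 'a \<Rightarrow> real \<Rightarrow> 'a set" where
  "ballV N x0 r = {x. N (x - x0) < r}"

definition sphereS :: "('a::field \<Rightarrow> real) \<Rightarrow> 'a \<Rightarrow> real \<Rightarrow> 'a set" where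
  "sphereS N x0 r = {x. N (x - x0) = r}"

definition siegel_disk :: "('a::field \<Rightarrow> real) \<Rightarrow> ('a \<Rightarrow> 'a) \<Rightarrow> 'a set \<Rightarrow> 'a \<Rightarrow> real \<Rightarrow> bool" where
  "siegel_disk N F D x0 r \<longleftrightarrow> 0 < r \<and> x0 \<in> D \<and> F x0 = x0 \<and> ballV N x0 r \<subseteq> D \<and>
     (\<forall>\<rho><r. \<forall>x\<in>sphereS N x0 \<rho>. \<forall>n::nat. (F ^^ n) x \<in> D \<and> (F ^^ n) x \<in> sphereS N x0 \<rho>)"

definition max_siegel :: "('a::field \<Rightarrow> real) \<Rightarrow> ('a \<Rightarrow> 'a) \<Rightarrow> 'a set \<Rightarrow> 'a \<Rightarrow> 'a set" where
  "max_siegel N F D x0 = \<Union>{ballV N x0 r | r. siegel_disk N F D x0 r}"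

end

theory Submission
  imports Defs
begin

text \<open>Let \<open>x\<^sub>0\<close> be a fixed point of \<open>f(x) = (x + a) / (b x + c)\<close> and \<open>g = b x\<^sub>0 + c\<close>.
  Then \<open>f(x) - x\<^sub>0 = (c - a b)(x - x\<^sub>0) / ((b x + c) g)\<close>, and \<open>|f'(x\<^sub>0)| = 1\<close> says
  \<open>|c - a b| = |g|\<^sup>2\<close>. On the ball \<open>|x - x\<^sub>0| < |g| / |b|\<close> the ultrametric inequality forces
  \<open>|b x + c| = |b (x - x\<^sub>0) + g| = |g|\<close>, so \<open>f\<close> preserves the distance to \<open>x\<^sub>0\<close> there and every
  sphere about \<open>x\<^sub>0\<close> inside this ball is invariant. The pole \<open>-c/b\<close> lies at distance exactly
  \<open>|g| / |b| = \<surd>|c - a b| / |b|\<close> from \<open>x\<^sub>0\<close>, so no larger ball is contained in the domain.\<close>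

context
  fixes N :: "'a::field \<Rightarrow> real"
  assumes N: "nonarch_abs N"
begin

lemma nonarch_abs_nonneg: "0 \<le> N x"
  and nonarch_abs_eq_0_iff [simp]: "N x = 0 \<longleftrightarrow> x = 0"
  and nonarch_abs_mult [simp]: "N (x * y) = N x * N y"
  and nonarch_abs_ultrametric: "N (x + y) \<le> max (N x) (N y)"
  using N unfolding nonarch_abs_def by auto

lemma nonarch_abs_pos [simp]: "0 < N x \<longleftrightarrow> x \<noteq> 0"
  using nonarch_abs_nonneg[of x] by (auto simp: less_le)

lemma nonarch_abs_zero [simp]: "N 0 = 0"
  by simp

lemma nonarch_abs_one [simp]: "N 1 = 1"
  using nonarch_abs_mult[of 1 1] by simp

lemma nonarch_abs_minus [simp]: "N (- x) = N x"
proof -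
  have "N (- 1) ^ 2 = 1"
    using nonarch_abs_mult[of "- 1" "- 1"] by (simp add: power2_eq_square)
  then have "N (- 1) = 1"
    using nonarch_abs_nonneg[of "- 1"] by (auto simp: power2_eq_1_iff)
  then show ?thesis
    using nonarch_abs_mult[of "- 1" x] by simp
qed

lemma nonarch_abs_inverse [simp]: "N (inverse x) = inverse (N x)"
proof (cases "x = 0")
  case False
  then have "N x * N (inverse x) = 1"
    using nonarch_abs_mult[of x "inverse x"] by simp
  then show ?thesis
    by (simp add: inverse_unique)
qed simp

lemma nonarch_abs_divide [simp]: "N (x / y) = N x / N y"
  by (simp add: divide_inverse)

lemma nonarch_abs_power [simp]: "N (x ^ n) = N x ^ n"
  by (induction n) simp_all

lemma nonarch_abs_add_eq_right:
  assumes "N u < N v"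
  shows "N (u + v) = N v"
proof -
  have "N (u + v) \<le> N v"
    using nonarch_abs_ultrametric[of u v] assms by simp
  moreover have "N v \<le> max (N (u + v)) (N u)"
    using nonarch_abs_ultrametric[of "u + v" "- u"] by simp
  ultimately show ?thesis
    using assms by linarith
qed

lemma max_siegel_eq_ballV:
  assumes "0 < R" and "F x0 = x0" and "ballV N x0 R \<subseteq> D"
    and isometric: "\<And>x. N (x - x0) < R \<Longrightarrow> N (F x - x0) = N (x - x0)"
    and boundary: "y \<notin> D" "N (y - x0) = R"
  shows "max_siegel N F D x0 = ballV N x0 R"
proof -
  have iterate: "N ((F ^^ n) x - x0) = N (x - x0)" if "N (x - x0) < R" for x n
    using that by (induction n) (simp_all add: isometric)
  have "siegel_disk N F D x0 R"
    unfolding siegel_disk_def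
  proof (intro conjI allI impI ballI)
    show "x0 \<in> D"
      using assms(1,3) unfolding ballV_def by auto
    fix \<rho> x n
    assume "\<rho> < R" "x \<in> sphereS N x0 \<rho>"
    then show "(F ^^ n) x \<in> sphereS N x0 \<rho>" "(F ^^ n) x \<in> D"
      using iterate[of x n] assms(3) unfolding sphereS_def ballV_def by auto
  qed (use assms in auto)
  moreover have "ballV N x0 r \<subseteq> ballV N x0 R" if "siegel_disk N F D x0 r" for r
  proof -
    have "y \<notin> ballV N x0 r"
      using that boundary(1) unfolding siegel_disk_def by auto
    then show ?thesis
      using boundary(2) unfolding ballV_def by auto
  qed
  ultimately show ?thesis
    unfolding max_siegel_def by blast
qed

end

lemma mobius_fixed_point:
  fixes a b c t :: "'a::field"
  assumes "(2::'a) \<noteq> 0" and "b \<noteq> 0" and "t ^ 2 = (c - 1) ^ 2 + 4 * a * b"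
  defines "x0 \<equiv> (1 - c + t) / (2 * b)"
  shows "x0 + a = x0 * (b * x0 + c)"
proof -
  have x0: "2 * b * x0 = 1 - c + t"
    using assms unfolding x0_def by simp
  have "(2 * b * x0) ^ 2 + 2 * (c - 1) * (2 * b * x0) - 4 * a * b = 0"
    unfolding x0 using assms(3) by (simp add: algebra_simps power2_eq_square)
  then have "4 * b * (x0 * (b * x0 + c) - x0 - a) = 0"
    by (simp add: algebra_simps power2_eq_square)
  moreover have "(4::'a) \<noteq> 0"
    using assms(1) by (metis mult_2 mult_eq_0_iff numeral_Bit0)
  ultimately have "x0 * (b * x0 + c) - x0 - a = 0"
    using assms(2) by simp
  then show ?thesis
    by (simp add: algebra_simps)
qed

lemma mobius_sub_fixed_point:
  fixes a b c x x0 :: "'a::field"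
  assumes "x0 + a = x0 * (b * x0 + c)" and "b * x0 + c \<noteq> 0" and "b * x + c \<noteq> 0"
  shows "(x + a) / (b * x + c) - x0 = (c - a * b) * (x - x0) / ((b * x + c) * (b * x0 + c))"
proof -
  have "x0 = (x0 + a) / (b * x0 + c)"
    using assms(1,2) by simp
  then have "(x + a) / (b * x + c) - x0
      = ((x + a) * (b * x0 + c) - (x0 + a) * (b * x + c)) / ((b * x + c) * (b * x0 + c))"
    using assms(2,3) by (metis diff_frac_eq)
  also have "(x + a) * (b * x0 + c) - (x0 + a) * (b * x + c) = (c - a * b) * (x - x0)"
    by (simp add: algebra_simps)
  finally show ?thesis .
qed

lemma mobius_max_siegel:
  fixes N :: "'a::field \<Rightarrow> real" and a b c x0 :: 'a
  assumes N: "nonarch_abs N" and b: "b \<noteq> 0"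
    and fixed: "x0 + a = x0 * (b * x0 + c)"
    and neutral: "N ((c - a * b) / (b * x0 + c) ^ 2) = 1"
  shows "max_siegel N (\<lambda>x. (x + a) / (b * x + c)) {x. x \<noteq> - c / b} x0
     = ballV N x0 (sqrt (N (c - a * b)) / N b)"
proof -
  note [simp] = nonarch_abs_zero[OF N] nonarch_abs_eq_0_iff[OF N] nonarch_abs_pos[OF N] nonarch_abs_mult[OF N]
    nonarch_abs_minus[OF N] nonarch_abs_divide[OF N] nonarch_abs_power[OF N]
  define g where "g = b * x0 + c"
  define R where "R = N g / N b"
  have g: "g \<noteq> 0"
    using neutral unfolding g_def by auto
  have abs_det: "N (c - a * b) = N g ^ 2"
    using neutral g unfolding g_def by (simp add: field_simps)
  have pole: "N (- c / b - x0) = R"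
  proof -
    have "- c / b - x0 = - (g / b)"
      using b unfolding g_def by (simp add: field_simps)
    then show ?thesis
      unfolding R_def by simp
  qed
  have denominator: "N (b * x + c) = N g" if "N (x - x0) < R" for x
  proof -
    have "N (b * (x - x0)) < N g"
      using that b unfolding R_def by (simp add: pos_less_divide_eq mult.commute)
    then have "N (b * (x - x0) + g) = N g"
      by (rule nonarch_abs_add_eq_right[OF N])
    then show ?thesis
      unfolding g_def by (simp add: algebra_simps)
  qed
  have isometric: "N ((x + a) / (b * x + c) - x0) = N (x - x0)" if "N (x - x0) < R" for x
  proof -
    have "b * x + c \<noteq> 0"
      using denominator[OF that] g by auto
    then have "N ((x + a) / (b * x + c) - x0) = N (c - a * b) * N (x - x0) / (N g * N g)"
      using mobius_sub_fixed_point[OF fixed] g denominator[OF that] unfolding g_def by simp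
    then show ?thesis
      using g by (simp add: abs_det power2_eq_square)
  qed
  have "max_siegel N (\<lambda>x. (x + a) / (b * x + c)) {x. x \<noteq> - c / b} x0 = ballV N x0 R"
  proof (rule max_siegel_eq_ballV[OF N _ _ _ isometric _ pole])
    show "0 < R"
      unfolding R_def using b g by simp
    show "(x0 + a) / (b * x0 + c) = x0"
      using fixed g unfolding g_def by simp
    show "ballV N x0 R \<subseteq> {x. x \<noteq> - c / b}"
      using pole unfolding ballV_def by auto
  qed auto
  then show ?thesis
    using abs_det nonarch_abs_nonneg[OF N] unfolding R_def by simp
qed

lemma Cp_model_two_neq_zero:
  assumes "Cp_model p (N :: 'a::field \<Rightarrow> real)"
  shows "(2::'a) \<noteq> 0"
proof
  assume two: "(2::'a) = 0"
  have N: "nonarch_abs N" and p: "prime p" and Np: "N (of_nat p) = 1 / real p"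
    using assms unfolding Cp_model_def by auto
  have "(of_nat p :: 'a) = of_nat (2 * (p div 2) + p mod 2)"
    by simp
  also have "\<dots> = of_nat (p mod 2)"
    using two by (simp only: of_nat_add of_nat_mult) simp
  finally have "N (of_nat p) = 0 \<or> N (of_nat p) = 1"
    using nonarch_abs_zero[OF N] nonarch_abs_one[OF N]
    by (cases "p mod 2 = 0") (auto simp: mod_2_eq_odd)
  with Np prime_ge_2_nat[OF p] show False
    by auto
qed

theorem theorem3p2:
  fixes p :: nat and N :: "'a::field \<Rightarrow> real" and a b c s :: 'a
  assumes Cp: "Cp_model p N"
    and b0: "b \<noteq> 0" and cab: "c \<noteq> a * b"
    and s: "s ^ 2 = (c - 1) ^ 2 + 4 * a * b"
    and d1: "N ((c - a * b) / (b * ((1 - c + s) / (2 * b)) + c) ^ 2) = 1"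
    and d2: "N ((c - a * b) / (b * ((1 - c - s) / (2 * b)) + c) ^ 2) = 1"
    and small: "N b / sqrt (N (c - a * b)) < 1"
  shows "max_siegel N (\<lambda>x. (x + a) / (b * x + c)) {x. x \<noteq> - c / b} ((1 - c + s) / (2 * b))
           = ballV N ((1 - c + s) / (2 * b)) (1 + (sqrt (N (c - a * b)) / N b - 1))
       \<and> max_siegel N (\<lambda>x. (x + a) / (b * x + c)) {x. x \<noteq> - c / b} ((1 - c - s) / (2 * b))
           = ballV N ((1 - c - s) / (2 * b)) (1 + (sqrt (N (c - a * b)) / N b - 1))"
proof -
  have N: "nonarch_abs N"
    using Cp unfolding Cp_model_def by simp
  note two = Cp_model_two_neq_zero[OF Cp]
  have "(- s) ^ 2 = (c - 1) ^ 2 + 4 * a * b"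
    using s by simp
  from mobius_fixed_point[OF two b0 s] mobius_fixed_point[OF two b0 this]
  have fixed1: "(1 - c + s) / (2 * b) + a = (1 - c + s) / (2 * b) * (b * ((1 - c + s) / (2 * b)) + c)"
    and fixed2: "(1 - c - s) / (2 * b) + a = (1 - c - s) / (2 * b) * (b * ((1 - c - s) / (2 * b)) + c)"
    by simp_all
  show ?thesis
    using mobius_max_siegel[OF N b0 fixed1 d1] mobius_max_siegel[OF N b0 fixed2 d2] by simp
qed

end
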